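(* Let $n=p^{2}q^{2}$ with primes $2\leq p<q$. Let $\mathcal{D}_{S_{1}},\mathcal{D}_{S_{2}}$ be subsets of $\mathcal{D}_{[n]}\setminus\{n\}$. If $\mathrm{Spec}(\mathrm{ICG}(n,\mathcal{D}_{S_{1}}))=\mathrm{Spec}(\mathrm{ICG}(n,\mathcal{D}_{S_{2}}))$, then $\mathcal{D}_{S_{1}}=\mathcal{D}_{S_{2}}$.
   Context: For an integer $n\ge1$, identify $\mathbb{Z}_n$ with $[n]=\{1,\dots,n\}$ ($n$ playing the role of $0$). For a positive divisor $d$ of $n$, $G_n(d)=\{j\in[n]:\gcd(j,n)=d\}$. $\mathcal{D}_{[n]}$ denotes the set of all positive divisors of $n$. For $\mathcal{D}\subseteq\mathcal{D}_{[n]}\setminus\{n\}$, $\mathrm{ICG}(n,\mathcal{D})$ denotes the circulant graph $\mathrm{Cay}(\mathbb{Z}_n,S)$ with connection set $S=\bigcup_{d\in\mathcal{D}}G_n(d)$ (vertex set $\mathbb{Z}_n$, $g\sim h$ iff $h-g\in S$); we write $\mathcal{D}=\mathcal{D}_S$. $\mathrm{Spec}$ denotes the multiset of eigenvalues of the adjacency matrix. *)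

theory Defs
  imports "Jordan_Normal_Form.Char_Poly" "HOL-Computational_Algebra.Fundamental_Theorem_Algebra"
begin

text \<open>Z_n is identified with [n] = {1..n}, n playing the role of 0.
  zrep n x is the representative in [n] of the residue class of the integer x.\<close>
definition zrep :: "nat \<Rightarrow> int \<Rightarrow> nat" where
  "zrep n x = (let r = nat (x mod int n) in if r = 0 then n else r)"

definition Gset :: "nat \<Rightarrow> nat \<Rightarrow> nat set" where
  "Gset n d = {j \<in> {1..n}. gcd j n = d}"

definition conn_set :: "nat \<Rightarrow> nat set \<Rightarrow> nat set" where
  "conn_set n D = (\<Union>d\<in>D. Gset n d)"

text \<open>Adjacency matrix of ICG(n,D) = Cay(Z_n, S): the vertex with matrix index i
  (0 \<le> i < n) is the residue class of i; g ~ h iff h - g in S.\<close>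
definition ICG_adj :: "nat \<Rightarrow> nat set \<Rightarrow> complex mat" where
  "ICG_adj n D = mat n n (\<lambda>(i, j). if zrep n (int j - int i) \<in> conn_set n D then 1 else 0)"

definition Spec :: "complex mat \<Rightarrow> complex multiset" where
  "Spec A = proots (char_poly A)"

end

theory Submission
  imports Defs "HOL-Analysis.Complex_Transcendental" "HOL-Library.List_Lexorder" "HOL-Library.Product_Lexorder"
begin

text \<open>
  \<open>ICG(n, D)\<close> is a circulant graph, so its eigenvalues are the Fourier coefficients
  \<open>\<Sum>\<^sub>k [gcd k n \<in> D] \<omega>^(k t)\<close>. For \<open>n = p\<^sup>2 q\<^sup>2\<close> each coefficient is a sum of products of
  Ramanujan sums and depends only on the valuations \<open>(x, y)\<close> of \<open>t\<close> at \<open>p\<close> and \<open>q\<close>, capped at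
  \<open>2\<close>; the class \<open>(x, y)\<close> has \<open>\<phi>(p^(2-x)) \<phi>(q^(2-y))\<close> elements. So the spectrum is a multiset
  of nine integers with known multiplicities, and it remains to recover the pattern
  \<open>{(a, b). p^a q^b \<in> D}\<close> from it. For odd \<open>p\<close>, modulo \<open>q\<close> each eigenvalue agrees with that of
  the class \<open>(x, 0)\<close>, and the multiplicities \<open>\<phi>(p^(2-x)) q\<^sup>2\<close> are superincreasing; this fixes
  the eigenvalues with \<open>y = 0\<close>, symmetrically those with \<open>x = 0\<close>, and the four remaining
  classes again have superincreasing multiplicities. As the matrix of Ramanujan sums is
  invertible, the eigenvalues with \<open>y = 2\<close> determine the pattern. For \<open>p = 2\<close> and \<open>q \<ge> 7\<close> these
  four eigenvalues are isolated by counting modulo \<open>q - 1\<close>; the cases \<open>q \<in> {3, 5}\<close> are settled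
  by evaluation.
\<close>

section \<open>Circulant matrices\<close>

definition unity_root :: "nat \<Rightarrow> nat \<Rightarrow> complex" where
  "unity_root n j = exp (2 * of_real pi * \<i> * of_nat j / of_nat n)"

lemma unity_root_eq_iff: "n \<ge> 1 \<Longrightarrow> unity_root n j = unity_root n k \<longleftrightarrow> j mod n = k mod n"
  unfolding unity_root_def by (rule complex_root_unity_eq)

lemma unity_root_eq_1_iff: "n \<ge> 1 \<Longrightarrow> unity_root n j = 1 \<longleftrightarrow> n dvd j"
  unfolding unity_root_def by (rule complex_root_unity_eq_1)

lemma unity_root_0 [simp]: "unity_root n 0 = 1"
  unfolding unity_root_def by simp

lemma unity_root_add: "unity_root n (j + k) = unity_root n j * unity_root n k"
  unfolding unity_root_def by (simp add: add_divide_distrib distrib_left exp_add)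

lemma unity_root_mult: "unity_root n (j * k) = unity_root n k ^ j"
  by (induction j) (simp_all add: unity_root_add)

lemma unity_root_scale: "m > 0 \<Longrightarrow> unity_root (m * n) (m * j) = unity_root n j"
  unfolding unity_root_def by (simp add: field_simps)

lemma sum_unity_root_powers:
  assumes "n \<ge> 1"
  shows "(\<Sum>j<n. unity_root n (j * e)) = (if n dvd e then of_nat n else 0)"
proof (cases "n dvd e")
  case True
  then have "unity_root n (j * e) = 1" for j
    using unity_root_eq_1_iff[OF assms] by auto
  then show ?thesis using True by simp
next
  case False
  then have "unity_root n e \<noteq> 1"
    using unity_root_eq_1_iff[OF assms] by auto
  moreover have "unity_root n e ^ n = 1"
    using unity_root_mult[of n n e] unity_root_eq_1_iff[OF assms, of "n * e"] by simp
  ultimately show ?thesis using False by (simp add: unity_root_mult sum_gp_strict)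
qed

definition circulant :: "nat \<Rightarrow> (nat \<Rightarrow> complex) \<Rightarrow> complex mat" where
  "circulant n c = Matrix.mat n n (\<lambda>(i, j). c ((j + n - i) mod n))"

definition dft_mat :: "nat \<Rightarrow> complex mat" where
  "dft_mat n = Matrix.mat n n (\<lambda>(j, t). unity_root n (j * t))"

definition inverse_dft_mat :: "nat \<Rightarrow> complex mat" where
  "inverse_dft_mat n = Matrix.mat n n (\<lambda>(t, j). unity_root n (j * (n - t)) / of_nat n)"

lemma inverse_dft_mat_mult:
  assumes n: "n \<ge> 1"
  shows "inverse_dft_mat n * dft_mat n = 1\<^sub>m n"
proof (rule eq_matI)
  fix s t assume "s < dim_row (1\<^sub>m n)" "t < dim_col (1\<^sub>m n)"
  then have st: "s < n" "t < n" by auto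
  have "n dvd n - s + t \<longleftrightarrow> s = t"
  proof
    assume "n dvd n - s + t"
    then obtain k where k: "n - s + t = n * k" by (elim dvdE)
    have "0 < n * k" "n * k < n * 2" using st k by arith+
    then have "k = 1" by simp
    then show "s = t" using st k by simp
  qed (use st in simp)
  moreover have "(inverse_dft_mat n * dft_mat n) $$ (s, t)
      = (\<Sum>j<n. unity_root n (j * (n - s + t))) / of_nat n"
    using st by (simp add: inverse_dft_mat_def dft_mat_def scalar_prod_def atLeast0LessThan
        sum_divide_distrib unity_root_add[symmetric] algebra_simps)
  ultimately show "(inverse_dft_mat n * dft_mat n) $$ (s, t) = 1\<^sub>m n $$ (s, t)"
    using st n by (simp add: sum_unity_root_powers)
qed (auto simp: inverse_dft_mat_def dft_mat_def)

lemma sum_lessThan_rotate: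
  fixes g :: "nat \<Rightarrow> 'a::comm_monoid_add"
  assumes "i < n"
  shows "(\<Sum>j<n. g j) = (\<Sum>k<n. g ((k + i) mod n))"
proof (rule sum.reindex_bij_witness[where j = "\<lambda>j. (j + (n - i)) mod n" and i = "\<lambda>k. (k + i) mod n"])
  fix a assume "a \<in> {..<n}"
  have "((a + (n - i)) mod n + i) mod n = (a + (n - i) + i) mod n"
    by (simp add: mod_add_left_eq)
  also have "\<dots> = a" using \<open>a \<in> {..<n}\<close> assms by simp
  finally show "((a + (n - i)) mod n + i) mod n = a" .
  then show "g (((a + (n - i)) mod n + i) mod n) = g a" by (rule arg_cong)
next
  fix b assume "b \<in> {..<n}"
  have "((b + i) mod n + (n - i)) mod n = (b + i + (n - i)) mod n"
    by (simp add: mod_add_left_eq)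
  also have "\<dots> = b" using \<open>b \<in> {..<n}\<close> assms by simp
  finally show "((b + i) mod n + (n - i)) mod n = b" .
qed (use assms in auto)

lemma circulant_mult_dft_mat:
  assumes n: "n \<ge> 1"
  shows "circulant n c * dft_mat n
    = dft_mat n * Matrix.mat n n (\<lambda>(i, j). if i = j then \<Sum>k<n. c k * unity_root n (k * i) else 0)"
    (is "_ = _ * ?D")
proof (rule eq_matI)
  fix i t assume "i < dim_row (dft_mat n * ?D)" "t < dim_col (dft_mat n * ?D)"
  then have it: "i < n" "t < n" by (auto simp: dft_mat_def)
  have rot: "c (((k + i) mod n + n - i) mod n) * unity_root n ((k + i) mod n * t)
      = unity_root n (i * t) * (c k * unity_root n (k * t))" if "k < n" for k
  proof -
    have "((k + i) mod n + n - i) mod n = ((k + i) mod n + (n - i)) mod n"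
      using it by simp
    also have "\<dots> = (k + i + (n - i)) mod n"
      by (simp add: mod_add_left_eq)
    also have "\<dots> = k"
      using that it by simp
    finally have "((k + i) mod n + n - i) mod n = k" .
    moreover have "unity_root n ((k + i) mod n * t) = unity_root n ((k + i) * t)"
      using unity_root_eq_iff[OF n] by (simp add: mod_mult_left_eq)
    moreover have "unity_root n ((k + i) * t) = unity_root n (k * t) * unity_root n (i * t)"
      by (simp add: unity_root_add[symmetric] algebra_simps)
    ultimately show ?thesis by simp
  qed
  have "(circulant n c * dft_mat n) $$ (i, t) = (\<Sum>j<n. c ((j + n - i) mod n) * unity_root n (j * t))"
    using it by (simp add: circulant_def dft_mat_def scalar_prod_def atLeast0LessThan)
  also have "\<dots> = (\<Sum>k<n. unity_root n (i * t) * (c k * unity_root n (k * t)))"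
    by (subst sum_lessThan_rotate[OF it(1)]) (simp add: rot)
  also have "\<dots> = (dft_mat n * ?D) $$ (i, t)"
    using it by (simp add: dft_mat_def scalar_prod_def atLeast0LessThan sum_distrib_left
        if_distrib cong: if_cong)
  finally show "(circulant n c * dft_mat n) $$ (i, t) = (dft_mat n * ?D) $$ (i, t)" .
qed (auto simp: circulant_def dft_mat_def)

lemma Spec_circulant:
  assumes n: "n \<ge> 1"
  shows "Spec (circulant n c)
    = image_mset (\<lambda>t. \<Sum>k<n. c k * unity_root n (k * t)) (mset_set {..<n})"
proof -
  define ev where "ev t = (\<Sum>k<n. c k * unity_root n (k * t))" for t
  define D where "D = Matrix.mat n n (\<lambda>(i, j). if i = j then ev i else 0)"
  have dims: "circulant n c \<in> carrier_mat n n" "dft_mat n \<in> carrier_mat n n"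
    "inverse_dft_mat n \<in> carrier_mat n n" "D \<in> carrier_mat n n"
    by (auto simp: circulant_def dft_mat_def inverse_dft_mat_def D_def)
  note left_inv = inverse_dft_mat_mult[OF n]
  have right_inv: "dft_mat n * inverse_dft_mat n = 1\<^sub>m n"
    using mat_mult_left_right_inverse[OF dims(3,2) left_inv] .
  have "circulant n c = circulant n c * (dft_mat n * inverse_dft_mat n)"
    using dims by (simp add: right_inv)
  also have "\<dots> = (circulant n c * dft_mat n) * inverse_dft_mat n"
    using dims by (simp add: assoc_mult_mat)
  also have "circulant n c * dft_mat n = dft_mat n * D"
    unfolding D_def ev_def by (rule circulant_mult_dft_mat[OF n])
  finally have "similar_mat (circulant n c) D"
    using dims left_inv right_inv by (intro similar_matI) auto
  moreover have "diag_mat D = map ev [0..<n]"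
    by (simp add: diag_mat_def D_def)
  ultimately have "char_poly (circulant n c) = (\<Prod>a\<leftarrow>map ev [0..<n]. [:- a, 1:])"
    using char_poly_upper_triangular[OF dims(4)]
    by (simp add: char_poly_similar upper_triangular_def D_def)
  then have "Spec (circulant n c) = proots (\<Prod>p\<leftarrow>map (\<lambda>a. [:- a, 1:]) (map ev [0..<n]). p)"
    unfolding Spec_def by (simp add: comp_def)
  also have "\<dots> = (\<Sum>p\<leftarrow>map (\<lambda>a. [:- a, 1:]) (map ev [0..<n]). proots p)"
    by (rule proots_prod_list) auto
  also have "\<dots> = mset (map ev [0..<n])"
    by (induction n) simp_all
  finally show ?thesis by (simp add: ev_def[abs_def] atLeast0LessThan)
qed

lemma ICG_adj_eq_circulant:
  assumes n: "n \<ge> 1" and "n \<notin> D"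
  shows "ICG_adj n D = circulant n (\<lambda>k. of_bool (gcd k n \<in> D))"
proof (rule eq_matI)
  fix i j assume "i < dim_row (circulant n (\<lambda>k. of_bool (gcd k n \<in> D)))"
    "j < dim_col (circulant n (\<lambda>k. of_bool (gcd k n \<in> D)))"
  then have ij: "i < n" "j < n" by (auto simp: circulant_def)
  define r where "r = (j + n - i) mod n"
  have "int r = int (j + n - i) mod int n"
    by (simp add: r_def zmod_int)
  also have "int (j + n - i) = (int j - int i) + int n"
    using ij by simp
  finally have "(int j - int i) mod int n = int r"
    by simp
  then have "zrep n (int j - int i) = (if r = 0 then n else r)"
    unfolding zrep_def Let_def by simp
  moreover have "r < n" using n by (simp add: r_def)
  ultimately have "zrep n (int j - int i) \<in> conn_set n D \<longleftrightarrow> gcd r n \<in> D"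
    using \<open>n \<notin> D\<close> by (auto simp: conn_set_def Gset_def)
  then show "ICG_adj n D $$ (i, j) = circulant n (\<lambda>k. of_bool (gcd k n \<in> D)) $$ (i, j)"
    using ij by (simp add: ICG_adj_def circulant_def r_def of_bool_def)
qed (auto simp: ICG_adj_def circulant_def)

section \<open>Character sums over the classes of \<open>\<int>/p\<^sup>2q\<^sup>2\<close>\<close>

lemma prime_pow_mult_dvd_iff:
  fixes p q k :: nat
  assumes "prime p" "prime q" "p \<noteq> q"
  shows "p ^ a * q ^ b dvd k \<longleftrightarrow> p ^ a dvd k \<and> q ^ b dvd k"
proof
  assume "p ^ a dvd k \<and> q ^ b dvd k"
  moreover have "coprime (p ^ a) (q ^ b)"
    using primes_coprime[OF assms] by simp
  ultimately show "p ^ a * q ^ b dvd k"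
    using divides_mult by blast
qed (auto intro: dvd_mult_left dvd_mult_right)

lemma prime_pow_mult_dvd_prime_pow_mult_iff:
  fixes p q :: nat
  assumes p: "prime p" and q: "prime q" and pq: "p \<noteq> q"
  shows "p ^ a * q ^ b dvd p ^ i * q ^ j \<longleftrightarrow> a \<le> i \<and> b \<le> j"
proof -
  have "coprime (p ^ a) (q ^ j)" "coprime (q ^ b) (p ^ i)"
    using primes_coprime[OF p q pq] by (simp_all add: coprime_commute)
  then have "p ^ a * q ^ b dvd p ^ i * q ^ j \<longleftrightarrow> p ^ a dvd p ^ i \<and> q ^ b dvd q ^ j"
    by (simp add: prime_pow_mult_dvd_iff[OF p q pq] coprime_dvd_mult_left_iff
        coprime_dvd_mult_right_iff)
  also have "\<dots> \<longleftrightarrow> a \<le> i \<and> b \<le> j"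
    using dvd_power_iff_le[OF prime_ge_2_nat[OF p]] dvd_power_iff_le[OF prime_ge_2_nat[OF q]] by simp
  finally show ?thesis .
qed

lemma dvd_prime_sq_mult_sq:
  fixes p q d :: nat
  assumes p: "prime p" and q: "prime q" and "d dvd p\<^sup>2 * q\<^sup>2"
  obtains i j where "i \<le> 2" "j \<le> 2" "d = p ^ i * q ^ j"
proof -
  obtain b c where "d = b * c" "b dvd p\<^sup>2" "c dvd q\<^sup>2"
    using division_decomp[OF assms(3)] by blast
  moreover obtain i where "i \<le> 2" "b = p ^ i"
    using divides_primepow_nat[OF p] \<open>b dvd p\<^sup>2\<close> by blast
  moreover obtain j where "j \<le> 2" "c = q ^ j"
    using divides_primepow_nat[OF q] \<open>c dvd q\<^sup>2\<close> by blast
  ultimately show ?thesis using that by blast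
qed

definition capped_val :: "nat \<Rightarrow> nat \<Rightarrow> nat" where
  "capped_val p t = (if p\<^sup>2 dvd t then 2 else if p dvd t then 1 else 0)"

lemma capped_val_less: "capped_val p t < 3"
  by (simp add: capped_val_def)

lemma capped_val_0 [simp]: "capped_val p 0 = 2"
  by (simp add: capped_val_def)

lemma pow_capped_val_dvd: "p ^ capped_val p t dvd t"
  by (simp add: capped_val_def)

lemma pow_dvd_iff_le_capped_val:
  assumes "e \<le> 2"
  shows "p ^ e dvd t \<longleftrightarrow> e \<le> capped_val p t"
proof -
  have "p\<^sup>2 dvd t \<Longrightarrow> p dvd t"
    by (simp add: power2_eq_square dvd_mult_left)
  moreover have "e = 0 \<or> e = 1 \<or> e = 2" using assms by auto
  ultimately show ?thesis by (auto simp: capped_val_def)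
qed

lemma gcd_prime_sq_mult_sq:
  fixes p q k :: nat
  assumes p: "prime p" and q: "prime q" and pq: "p \<noteq> q"
  shows "gcd k (p\<^sup>2 * q\<^sup>2) = p ^ capped_val p k * q ^ capped_val q k"
proof -
  obtain i j where ij: "i \<le> 2" "j \<le> 2" "gcd k (p\<^sup>2 * q\<^sup>2) = p ^ i * q ^ j"
    using dvd_prime_sq_mult_sq[OF p q gcd_dvd2] by blast
  have "p ^ i * q ^ j dvd k"
    using gcd_dvd1[of k "p\<^sup>2 * q\<^sup>2"] ij(3) by simp
  then have "i \<le> capped_val p k" "j \<le> capped_val q k"
    using ij by (simp_all add: prime_pow_mult_dvd_iff[OF p q pq] pow_dvd_iff_le_capped_val)
  moreover have "p ^ capped_val p k * q ^ capped_val q k dvd k"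
    by (simp add: prime_pow_mult_dvd_iff[OF p q pq] pow_capped_val_dvd)
  moreover have "p ^ capped_val p k * q ^ capped_val q k dvd p\<^sup>2 * q\<^sup>2"
    using prime_pow_mult_dvd_prime_pow_mult_iff[OF p q pq] capped_val_less[of p k] capped_val_less[of q k]
    by simp
  ultimately have "p ^ capped_val p k * q ^ capped_val q k dvd p ^ i * q ^ j"
    using ij(3) by (metis gcd_greatest)
  then have "capped_val p k \<le> i" "capped_val q k \<le> j"
    using prime_pow_mult_dvd_prime_pow_mult_iff[OF p q pq] by simp_all
  with \<open>i \<le> capped_val p k\<close> \<open>j \<le> capped_val q k\<close> show ?thesis
    using ij(3) by simp
qed

lemma sum_lessThan_multiples:
  fixes f :: "nat \<Rightarrow> 'a::semiring_1"
  assumes M: "M > 0" and "M dvd n"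
  shows "(\<Sum>k<n. of_bool (M dvd k) * f k) = (\<Sum>l<n div M. f (M * l))"
proof -
  have n: "n = M * (n div M)" using \<open>M dvd n\<close> by simp
  have "{k \<in> {..<n}. M dvd k} = (\<lambda>l. M * l) ` {..<n div M}"
  proof (intro equalityI subsetI)
    fix k assume "k \<in> {k \<in> {..<n}. M dvd k}"
    then obtain l where "k = M * l" "M * l < M * (n div M)"
      using n by (auto elim: dvdE)
    then show "k \<in> (\<lambda>l. M * l) ` {..<n div M}" using M by auto
  next
    fix k assume "k \<in> (\<lambda>l. M * l) ` {..<n div M}"
    then obtain l where "k = M * l" "l < n div M" by auto
    then show "k \<in> {k \<in> {..<n}. M dvd k}"
      using M n by (metis dvd_triv_left lessThan_iff mem_Collect_eq mult_less_mono2)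
  qed
  moreover have "inj_on (\<lambda>l. M * l) {..<n div M}" using M by (simp add: inj_on_def)
  moreover have "(\<Sum>k<n. of_bool (M dvd k) * f k) = sum f {k \<in> {..<n}. M dvd k}"
    unfolding sum.inter_filter[OF finite_lessThan] by (intro sum.cong) auto
  ultimately show ?thesis by (simp add: sum.reindex)
qed

lemma sum_multiples_unity_root:
  assumes n: "n \<ge> 1" and M: "M > 0" and "M dvd n"
  shows "(\<Sum>k<n. of_bool (M dvd k) * unity_root n (k * t))
    = (if (n div M) dvd t then of_nat (n div M) else 0)"
proof -
  define N where "N = n div M"
  have nMN: "n = M * N" using \<open>M dvd n\<close> by (simp add: N_def)
  have "N \<ge> 1" using n nMN by (cases N) auto
  have "(\<Sum>k<n. of_bool (M dvd k) * unity_root n (k * t)) = (\<Sum>l<N. unity_root n (M * (l * t)))"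
    unfolding N_def by (simp add: sum_lessThan_multiples[OF M \<open>M dvd n\<close>] mult.assoc)
  also have "\<dots> = (\<Sum>l<N. unity_root N (l * t))"
    unfolding nMN using M by (simp add: unity_root_scale)
  also have "\<dots> = (if N dvd t then of_nat N else 0)"
    by (rule sum_unity_root_powers[OF \<open>N \<ge> 1\<close>])
  finally show ?thesis unfolding N_def .
qed

text \<open>The character sum of the subgroup of multiples of \<open>p ^ e\<close> in \<open>\<int>/p\<^sup>2\<close>,
  as a function of the capped valuation of the character.\<close>
definition multiples_char_sum :: "nat \<Rightarrow> nat \<Rightarrow> nat \<Rightarrow> int" where
  "multiples_char_sum p e x = (if 2 - e \<le> x then int p ^ (2 - e) else 0)"

text \<open>\<open>ramanujan p a x\<close> is the Ramanujan sum \<open>c\<^bsub>p^(2-a)\<^esub>(t)\<close> for every \<open>t\<close> with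
  \<open>capped_val p t = x\<close>.\<close>
definition ramanujan :: "nat \<Rightarrow> nat \<Rightarrow> nat \<Rightarrow> int" where
  "ramanujan p a x =
    (if a = 0 then (if x = 0 then 0 else if x = 1 then - int p else int p * int p - int p)
     else if a = 1 then (if x = 0 then -1 else int p - 1)
     else 1)"

definition class_size :: "nat \<Rightarrow> nat \<Rightarrow> nat" where
  "class_size p x = (if x = 0 then p * (p - 1) else if x = 1 then p - 1 else 1)"

lemma ramanujan_at_2: "p \<ge> 1 \<Longrightarrow> ramanujan p a 2 = int (class_size p a)"
  by (auto simp: ramanujan_def class_size_def of_nat_diff algebra_simps)

lemma lessThan_3: "{..<3::nat} = {0, 1, 2}"
  by auto

lemma less_3_cases: "(a::nat) < 3 \<Longrightarrow> a = 0 \<or> a = 1 \<or> a = 2"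
  by auto

definition chain_mobius :: "nat \<Rightarrow> nat \<Rightarrow> int" where
  "chain_mobius x e = (if e = x then 1 else if e = x + 1 then -1 else 0)"

lemma of_bool_capped_val_eq:
  assumes "x < 3"
  shows "of_bool (capped_val r t = x) = (\<Sum>e<3. chain_mobius x e * of_bool (r ^ e dvd t))"
proof -
  have "(\<Sum>e<3. chain_mobius x e * of_bool (r ^ e dvd t))
      = (\<Sum>e<3. chain_mobius x e * of_bool (e \<le> capped_val r t))"
    by (intro sum.cong refl) (simp add: pow_dvd_iff_le_capped_val)
  moreover have "x = 0 \<or> x = 1 \<or> x = 2" "capped_val r t = 0 \<or> capped_val r t = 1 \<or> capped_val r t = 2"
    using assms capped_val_less[of r t] by auto
  ultimately show ?thesis
    unfolding lessThan_3 by (auto simp: chain_mobius_def)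
qed

lemma ramanujan_eq_sum:
  assumes "a < 3" "x < 3"
  shows "ramanujan p a x = (\<Sum>e<3. chain_mobius a e * multiples_char_sum p e x)"
  using assms by (auto simp: eval_nat_numeral less_Suc_eq ramanujan_def chain_mobius_def
      multiples_char_sum_def power2_eq_square)

context
  fixes p q :: nat
  assumes p: "prime p" and q: "prime q" and pq: "p \<noteq> q"
begin

lemma sum_common_multiples_unity_root:
  assumes e: "e \<le> 2" and f: "f \<le> 2"
  shows "(\<Sum>k<p\<^sup>2 * q\<^sup>2. of_bool (p ^ e dvd k \<and> q ^ f dvd k) * unity_root (p\<^sup>2 * q\<^sup>2) (k * t))
    = of_int (multiples_char_sum p e (capped_val p t) * multiples_char_sum q f (capped_val q t))"
proof -
  have M: "p ^ e * q ^ f > 0" using p q prime_gt_0_nat by simp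
  have "p\<^sup>2 = p ^ e * p ^ (2 - e)" "q\<^sup>2 = q ^ f * q ^ (2 - f)"
    using e f by (simp_all add: power_add[symmetric])
  then have n: "p\<^sup>2 * q\<^sup>2 = (p ^ e * q ^ f) * (p ^ (2 - e) * q ^ (2 - f))"
    by (simp add: algebra_simps)
  then have "p ^ e * q ^ f dvd p\<^sup>2 * q\<^sup>2" "p\<^sup>2 * q\<^sup>2 div (p ^ e * q ^ f) = p ^ (2 - e) * q ^ (2 - f)"
    using M by simp_all
  moreover have "p\<^sup>2 * q\<^sup>2 \<ge> 1" using p q prime_gt_0_nat by (simp add: Suc_le_eq)
  ultimately show ?thesis
    using sum_multiples_unity_root[OF _ M, of "p\<^sup>2 * q\<^sup>2" t] e f
    by (simp add: prime_pow_mult_dvd_iff[OF p q pq] pow_dvd_iff_le_capped_val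
        multiples_char_sum_def)
qed

text \<open>Inclusion-exclusion over the chains \<open>1 | p | p\<^sup>2\<close> and \<open>1 | q | q\<^sup>2\<close> reduces the sum
  over a class to sums over subgroups of multiples.\<close>
lemma sum_class_unity_root:
  assumes a: "a < 3" and b: "b < 3"
  shows "(\<Sum>k<p\<^sup>2 * q\<^sup>2. of_bool (capped_val p k = a \<and> capped_val q k = b) * unity_root (p\<^sup>2 * q\<^sup>2) (k * t))
    = of_int (ramanujan p a (capped_val p t) * ramanujan q b (capped_val q t))"
proof -
  let ?n = "p\<^sup>2 * q\<^sup>2"
  let ?c = "\<lambda>e f. chain_mobius a e * chain_mobius b f"
  have ind: "of_bool (capped_val p k = a \<and> capped_val q k = b)
      = (\<Sum>e<3. \<Sum>f<3. of_int (?c e f) * of_bool (p ^ e dvd k \<and> q ^ f dvd k) :: complex)" for k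
  proof -
    have "of_bool (capped_val p k = a \<and> capped_val q k = b)
        = (\<Sum>e<3. \<Sum>f<3. ?c e f * of_bool (p ^ e dvd k \<and> q ^ f dvd k) :: int)"
      unfolding of_bool_conj of_bool_capped_val_eq[OF a] of_bool_capped_val_eq[OF b] sum_product
      by (simp only: mult_ac)
    then show ?thesis by (metis (no_types, lifting) of_int_of_bool of_int_sum of_int_mult sum.cong)
  qed
  have "(\<Sum>k<?n. of_bool (capped_val p k = a \<and> capped_val q k = b) * unity_root ?n (k * t))
      = (\<Sum>e<3. \<Sum>f<3. of_int (?c e f) *
          (\<Sum>k<?n. of_bool (p ^ e dvd k \<and> q ^ f dvd k) * unity_root ?n (k * t)))"
    by (simp only: ind sum_distrib_left sum_distrib_right sum.swap[of _ "{..<?n}"] mult.assoc)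
  also have "\<dots> = of_int (\<Sum>e<3. \<Sum>f<3. ?c e f *
      (multiples_char_sum p e (capped_val p t) * multiples_char_sum q f (capped_val q t)))"
    unfolding of_int_sum
    by (intro sum.cong refl) (simp add: sum_common_multiples_unity_root del: sum_of_bool_mult_eq)
  also have "\<dots> = of_int (ramanujan p a (capped_val p t) * ramanujan q b (capped_val q t))"
    using a b capped_val_less[of p t] capped_val_less[of q t]
    by (simp add: ramanujan_eq_sum sum_product algebra_simps)
  finally show ?thesis .
qed

lemma card_class:
  assumes "x < 3" "y < 3"
  shows "card {k \<in> {..<p\<^sup>2 * q\<^sup>2}. capped_val p k = x \<and> capped_val q k = y}
    = class_size p x * class_size q y"
proof -
  have "(of_nat (card {k \<in> {..<p\<^sup>2 * q\<^sup>2}. capped_val p k = x \<and> capped_val q k = y}) :: complex)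
      = of_int (ramanujan p x 2 * ramanujan q y 2)"
    using sum_class_unity_root[OF assms, of 0] by (simp add: Int_def)
  also have "\<dots> = of_nat (class_size p x * class_size q y)"
    using ramanujan_at_2[OF prime_ge_1_nat[OF p]] ramanujan_at_2[OF prime_ge_1_nat[OF q]] by simp
  finally show ?thesis by (simp only: of_nat_eq_iff)
qed

end

text \<open>A pattern \<open>m\<close> encodes the set of divisors \<open>p ^ a * q ^ b\<close> with \<open>m a b\<close>;
  \<open>class_eigenvalue p q m x y\<close> is the eigenvalue at every \<open>t\<close> with capped valuations \<open>(x, y)\<close>.\<close>
definition class_eigenvalue :: "nat \<Rightarrow> nat \<Rightarrow> (nat \<Rightarrow> nat \<Rightarrow> bool) \<Rightarrow> nat \<Rightarrow> nat \<Rightarrow> int" where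
  "class_eigenvalue p q m x y = (\<Sum>a<3. \<Sum>b<3. of_bool (m a b) * ramanujan p a x * ramanujan q b y)"

definition int_spectrum :: "nat \<Rightarrow> nat \<Rightarrow> (nat \<Rightarrow> nat \<Rightarrow> bool) \<Rightarrow> int multiset" where
  "int_spectrum p q m =
    (\<Sum>x<3. \<Sum>y<3. replicate_mset (class_size p x * class_size q y) (class_eigenvalue p q m x y))"

lemma image_mset_sum: "image_mset f (\<Sum>x\<in>A. g x) = (\<Sum>x\<in>A. image_mset f (g x))"
  by (induction A rule: infinite_finite_induct) auto

lemma sum_pair_if_eq:
  fixes x y :: nat and f :: "nat \<Rightarrow> nat \<Rightarrow> 'a::comm_monoid_add"
  assumes "x < 3" "y < 3"
  shows "(\<Sum>a<3. \<Sum>b<3. if x = a \<and> y = b then f a b else 0) = f x y"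
proof -
  have "(\<Sum>b<3. if x = a \<and> y = b then f a b else 0) = (if x = a then f a y else 0)" for a
  proof (cases "x = a")
    case True
    have "(\<Sum>b<3. if y = b then f a b else 0) = f a y"
      using assms(2) by (subst sum.delta') auto
    then show ?thesis using True by simp
  qed simp
  then have "(\<Sum>a<3. \<Sum>b<3. if x = a \<and> y = b then f a b else 0) = (\<Sum>a<3. if x = a then f a y else 0)"
    by (rule sum.cong[OF refl])
  also have "\<dots> = f x y"
    using assms(1) by (subst sum.delta') auto
  finally show ?thesis .
qed

context
  fixes p q :: nat
  assumes p: "prime p" and q: "prime q" and pq: "p \<noteq> q"
begin

lemma sum_gcd_mem_unity_root:
  "(\<Sum>k<p\<^sup>2 * q\<^sup>2. of_bool (gcd k (p\<^sup>2 * q\<^sup>2) \<in> D) * unity_root (p\<^sup>2 * q\<^sup>2) (k * t))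
    = of_int (class_eigenvalue p q (\<lambda>a b. p ^ a * q ^ b \<in> D) (capped_val p t) (capped_val q t))"
proof -
  let ?n = "p\<^sup>2 * q\<^sup>2"
  have ind: "of_bool (gcd k ?n \<in> D)
      = (\<Sum>a<3. \<Sum>b<3. of_bool (p ^ a * q ^ b \<in> D) * of_bool (capped_val p k = a \<and> capped_val q k = b) :: complex)"
    for k
  proof -
    have "(of_bool (gcd k ?n \<in> D) :: complex) = of_bool (p ^ capped_val p k * q ^ capped_val q k \<in> D)"
      by (simp only: gcd_prime_sq_mult_sq[OF p q pq])
    also have "\<dots> = (\<Sum>a<3. \<Sum>b<3.
        if capped_val p k = a \<and> capped_val q k = b then of_bool (p ^ a * q ^ b \<in> D) else 0)"
      by (rule sum_pair_if_eq[of _ _ "\<lambda>a b. of_bool (p ^ a * q ^ b \<in> D)", symmetric])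
        (rule capped_val_less)+
    also have "\<dots> = (\<Sum>a<3. \<Sum>b<3. of_bool (p ^ a * q ^ b \<in> D) * of_bool (capped_val p k = a \<and> capped_val q k = b))"
      by (intro sum.cong refl) simp
    finally show ?thesis .
  qed
  have "(\<Sum>k<?n. of_bool (gcd k ?n \<in> D) * unity_root ?n (k * t))
      = (\<Sum>a<3. \<Sum>b<3. of_bool (p ^ a * q ^ b \<in> D) *
          (\<Sum>k<?n. of_bool (capped_val p k = a \<and> capped_val q k = b) * unity_root ?n (k * t)))"
    by (simp only: ind sum_distrib_left sum_distrib_right sum.swap[of _ "{..<?n}"] mult.assoc)
  also have "\<dots> = (\<Sum>a<3. \<Sum>b<3. of_bool (p ^ a * q ^ b \<in> D) *
      of_int (ramanujan p a (capped_val p t) * ramanujan q b (capped_val q t)))"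
    by (intro sum.cong refl arg_cong2[where f = "(*)"] sum_class_unity_root[OF p q pq]) auto
  also have "\<dots> = of_int (class_eigenvalue p q (\<lambda>a b. p ^ a * q ^ b \<in> D) (capped_val p t) (capped_val q t))"
    by (simp add: class_eigenvalue_def of_int_sum mult.assoc)
  finally show ?thesis .
qed

lemma image_mset_capped_vals:
  "image_mset (\<lambda>k. (capped_val p k, capped_val q k)) (mset_set {..<p\<^sup>2 * q\<^sup>2})
    = (\<Sum>x<3. \<Sum>y<3. replicate_mset (class_size p x * class_size q y) (x, y))"
proof (rule multiset_eqI)
  fix xy :: "nat \<times> nat"
  obtain x y where xy: "xy = (x, y)" by (cases xy)
  have "count (image_mset (\<lambda>k. (capped_val p k, capped_val q k)) (mset_set {..<p\<^sup>2 * q\<^sup>2})) (x, y)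
      = card {k \<in> {..<p\<^sup>2 * q\<^sup>2}. capped_val p k = x \<and> capped_val q k = y}"
    by (simp add: count_image_mset_eq_card_vimage)
  moreover have "count (\<Sum>x<3. \<Sum>y<3. replicate_mset (class_size p x * class_size q y) (x, y)) (x, y)
      = (\<Sum>a<3. \<Sum>b<3. if x = a \<and> y = b then class_size p a * class_size q b else 0)"
    by (simp only: count_sum count_replicate_mset prod.inject)
  moreover have "card {k \<in> {..<p\<^sup>2 * q\<^sup>2}. capped_val p k = x \<and> capped_val q k = y}
      = (\<Sum>a<3. \<Sum>b<3. if x = a \<and> y = b then class_size p a * class_size q b else 0)"
  proof (cases "x < 3 \<and> y < 3")
    case True
    then show ?thesis by (simp only: card_class[OF p q pq] sum_pair_if_eq)
  next
    case False
    then have "{k \<in> {..<p\<^sup>2 * q\<^sup>2}. capped_val p k = x \<and> capped_val q k = y} = {}"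
      using capped_val_less[of p] capped_val_less[of q] by blast
    moreover have "(\<Sum>a<3. \<Sum>b<3. if x = a \<and> y = b then class_size p a * class_size q b else 0) = 0"
      by (intro sum.neutral ballI) (use False in auto)
    ultimately show ?thesis by (simp only: card.empty)
  qed
  ultimately show "count (image_mset (\<lambda>k. (capped_val p k, capped_val q k)) (mset_set {..<p\<^sup>2 * q\<^sup>2})) xy
      = count (\<Sum>x<3. \<Sum>y<3. replicate_mset (class_size p x * class_size q y) (x, y)) xy"
    unfolding xy by (simp only:)
qed

lemma Spec_ICG_adj_prime_sq_mult_sq:
  assumes "p\<^sup>2 * q\<^sup>2 \<notin> D"
  shows "Spec (ICG_adj (p\<^sup>2 * q\<^sup>2) D) = image_mset of_int (int_spectrum p q (\<lambda>a b. p ^ a * q ^ b \<in> D))"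
proof -
  let ?n = "p\<^sup>2 * q\<^sup>2"
  let ?ev = "class_eigenvalue p q (\<lambda>a b. p ^ a * q ^ b \<in> D)"
  have n: "?n \<ge> 1" using p q prime_gt_0_nat by (simp add: Suc_le_eq)
  have "Spec (ICG_adj ?n D) = image_mset (\<lambda>k. of_int (?ev (capped_val p k) (capped_val q k))) (mset_set {..<?n})"
    by (simp only: ICG_adj_eq_circulant[OF n assms] Spec_circulant[OF n] sum_gcd_mem_unity_root)
  also have "\<dots> = image_mset (\<lambda>(x, y). of_int (?ev x y))
      (image_mset (\<lambda>k. (capped_val p k, capped_val q k)) (mset_set {..<?n}))"
    by (simp add: image_mset.compositionality comp_def)
  also have "\<dots> = image_mset of_int (int_spectrum p q (\<lambda>a b. p ^ a * q ^ b \<in> D))"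
    unfolding image_mset_capped_vals int_spectrum_def by (simp add: image_mset_sum)
  finally show ?thesis .
qed

end

section \<open>Superincreasing multiplicities\<close>

text \<open>These simp rules would turn the indicator sums below into sums over filtered sets.\<close>
declare sum_mult_of_bool_eq [simp del] sum_of_bool_mult_eq [simp del]

fun superincreasing :: "nat list \<Rightarrow> bool" where
  "superincreasing [] \<longleftrightarrow> True"
| "superincreasing (w # ws) \<longleftrightarrow> sum_list ws < w \<and> superincreasing ws"

fun weighted_mset :: "nat list \<Rightarrow> 'a list \<Rightarrow> 'a multiset" where
  "weighted_mset (w # ws) (a # as) = replicate_mset w a + weighted_mset ws as"
| "weighted_mset _ _ = {#}"

lemma size_weighted_mset: "length as = length ws \<Longrightarrow> size (weighted_mset ws as) = sum_list ws"
proof (induction ws arbitrary: as)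
  case (Cons w ws)
  then show ?case by (cases as) auto
qed simp

lemma weighted_mset_inj:
  assumes "superincreasing ws" "length as = length ws" "length bs = length ws"
    and "weighted_mset ws as = weighted_mset ws bs"
  shows "as = bs"
  using assms
proof (induction ws arbitrary: as bs)
  case (Cons w ws)
  obtain a as' b bs' where ab: "as = a # as'" "bs = b # bs'"
    using Cons.prems(2,3) by (cases as; cases bs) auto
  have eq: "replicate_mset w a + weighted_mset ws as' = replicate_mset w b + weighted_mset ws bs'"
    using Cons.prems(4) ab by simp
  have "a = b"
  proof (rule ccontr)
    assume "a \<noteq> b"
    then have "count (replicate_mset w b + weighted_mset ws bs') a \<le> sum_list ws"
      using count_le_size[of "weighted_mset ws bs'" a] size_weighted_mset[of bs' ws] Cons.prems(3) ab
      by simp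
    moreover have "w \<le> count (replicate_mset w a + weighted_mset ws as') a" by simp
    ultimately show False using eq Cons.prems(1) by simp
  qed
  then show ?case
    using Cons ab eq by simp
qed simp

fun subset_sum :: "nat list \<Rightarrow> bool list \<Rightarrow> nat" where
  "subset_sum (w # ws) (c # cs) = (if c then w else 0) + subset_sum ws cs"
| "subset_sum _ _ = 0"

lemma subset_sum_le: "subset_sum ws cs \<le> sum_list ws"
  by (induction ws cs rule: subset_sum.induct) auto

lemma subset_sum_inj:
  assumes "superincreasing ws" "length bs = length ws" "length cs = length ws"
    and "subset_sum ws bs = subset_sum ws cs"
  shows "bs = cs"
  using assms
proof (induction ws arbitrary: bs cs)
  case (Cons w ws)
  obtain b bs' c cs' where bc: "bs = b # bs'" "cs = c # cs'"
    using Cons.prems(2,3) by (cases bs; cases cs) auto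
  have eq: "(if b then w else 0) + subset_sum ws bs' = (if c then w else 0) + subset_sum ws cs'"
    using Cons.prems(4) bc by simp
  have "subset_sum ws bs' < w" "subset_sum ws cs' < w"
    using subset_sum_le[of ws] Cons.prems(1) by (auto intro: le_less_trans)
  then have "b = c" using eq by (cases b; cases c) auto
  then show ?case
    using Cons bc eq by simp
qed simp

lemma sum_replicate_mset: "(\<Sum>y\<in>A. replicate_mset (f y) c) = replicate_mset (sum f A) c"
  by (rule multiset_eqI) (simp add: count_sum)

lemma mset_eq_if_counts_dvd:
  assumes eq: "A + B = A' + B'"
    and dvd: "\<And>v. k dvd count A v" "\<And>v. k dvd count A' v"
    and size: "size B < k" "size B' < k"
  shows "B = B'"
proof (rule multiset_eqI)
  fix v
  have "count B v < k" "count B' v < k"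
    using count_le_size[of B v] count_le_size[of B' v] size by simp_all
  moreover have "(count A v + count B v) mod k = (count A' v + count B' v) mod k"
    using arg_cong[OF eq, of "\<lambda>M. count M v"] by simp
  ultimately show "count B v = count B' v"
    using dvd[of v] by (simp add: mod_add_left_eq[symmetric])
qed

section \<open>Recovering the divisor pattern from the spectrum\<close>

definition row_value :: "nat \<Rightarrow> (nat \<Rightarrow> nat \<Rightarrow> bool) \<Rightarrow> nat \<Rightarrow> nat \<Rightarrow> int" where
  "row_value q m a y = (\<Sum>b<3. of_bool (m a b) * ramanujan q b y)"

lemma class_eigenvalue_eq_sum_rows:
  "class_eigenvalue p q m x y = (\<Sum>a<3. ramanujan p a x * row_value q m a y)"
  unfolding class_eigenvalue_def row_value_def by (simp add: sum_distrib_left mult_ac)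

lemma class_eigenvalue_swap:
  "class_eigenvalue p q m x y = class_eigenvalue q p (\<lambda>a b. m b a) y x"
  unfolding class_eigenvalue_def by (subst sum.swap) (simp add: mult_ac)

lemma int_spectrum_swap: "int_spectrum p q m = int_spectrum q p (\<lambda>a b. m b a)"
  unfolding int_spectrum_def by (subst sum.swap) (simp add: mult_ac class_eigenvalue_swap[of p])

lemma row_value_0: "row_value q m a 0 = of_bool (m a 2) - of_bool (m a 1)"
  by (simp add: row_value_def lessThan_3 ramanujan_def)

lemma row_value_2:
  "q \<ge> 1 \<Longrightarrow> row_value q m a 2 = int (subset_sum [class_size q 0, class_size q 1, class_size q 2] [m a 0, m a 1, m a 2])"
  by (simp add: row_value_def ramanujan_at_2 lessThan_3)

lemma ramanujan_dvd_diff: "int p dvd ramanujan p a x - ramanujan p a 0"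
  by (auto simp: ramanujan_def algebra_simps)

lemma class_eigenvalue_mod_eq:
  "class_eigenvalue p q m x y mod int q = class_eigenvalue p q m x 0 mod int q"
proof -
  have "class_eigenvalue p q m x y - class_eigenvalue p q m x 0
      = (\<Sum>a<3. \<Sum>b<3. of_bool (m a b) * ramanujan p a x * (ramanujan q b y - ramanujan q b 0))"
    unfolding class_eigenvalue_def by (simp add: sum_subtractf[symmetric] algebra_simps)
  also have "int q dvd \<dots>"
    by (intro dvd_sum dvd_mult ramanujan_dvd_diff)
  finally show ?thesis by (simp add: mod_eq_dvd_iff)
qed

lemma sum_class_size: "q \<ge> 1 \<Longrightarrow> (\<Sum>y<3. class_size q y) = q\<^sup>2"
  by (simp add: lessThan_3 class_size_def power2_eq_square algebra_simps)

lemma image_mset_int_spectrum_mod: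
  assumes "q \<ge> 1"
  shows "image_mset (\<lambda>v. v mod int q) (int_spectrum p q m)
    = weighted_mset [class_size p 0 * q\<^sup>2, class_size p 1 * q\<^sup>2, class_size p 2 * q\<^sup>2]
        (map (\<lambda>x. class_eigenvalue p q m x 0 mod int q) [0, 1, 2])"
proof -
  have "image_mset (\<lambda>v. v mod int q) (int_spectrum p q m)
      = (\<Sum>x<3. \<Sum>y<3. replicate_mset (class_size p x * class_size q y) (class_eigenvalue p q m x 0 mod int q))"
    unfolding int_spectrum_def image_mset_sum image_replicate_mset
    by (intro sum.cong refl arg_cong[where f = "replicate_mset _"] class_eigenvalue_mod_eq)
  also have "\<dots> = (\<Sum>x<3. replicate_mset (class_size p x * q\<^sup>2) (class_eigenvalue p q m x 0 mod int q))"
    by (simp add: sum_replicate_mset sum_distrib_left[symmetric] sum_class_size[OF assms])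
  also have "\<dots> = weighted_mset [class_size p 0 * q\<^sup>2, class_size p 1 * q\<^sup>2, class_size p 2 * q\<^sup>2]
        (map (\<lambda>x. class_eigenvalue p q m x 0 mod int q) [0, 1, 2])"
    by (simp add: lessThan_3 add_ac)
  finally show ?thesis .
qed

lemma superincreasing_class_sizes:
  assumes "p \<ge> 3" "c > 0"
  shows "superincreasing [class_size p 0 * c, class_size p 1 * c, class_size p 2 * c]"
proof -
  have "1 * c < (p - 1) * c" "p * c < p * c * (p - 1)"
    using assms by (simp_all only: mult_less_mono1 mult_less_mono2) simp_all
  then show ?thesis
    using assms by (simp add: class_size_def algebra_simps)
qed

lemma ramanujan_combination_eq_0:
  assumes "p \<ge> 1" and "\<And>x. x < 3 \<Longrightarrow> (\<Sum>a<3. ramanujan p a x * d a) = 0" and "a < 3"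
  shows "d a = 0"
proof -
  have e0: "d 2 - d 1 = 0" and e1: "- int p * d 0 + (int p - 1) * d 1 + d 2 = 0"
    and e2: "(int p * int p - int p) * d 0 + (int p - 1) * d 1 + d 2 = 0"
    using assms(2)[of 0] assms(2)[of 1] assms(2)[of 2]
    by (simp_all add: lessThan_3 ramanujan_def algebra_simps)
  have "int p * int p * d 0
      = ((int p * int p - int p) * d 0 + (int p - 1) * d 1 + d 2) - (- int p * d 0 + (int p - 1) * d 1 + d 2)"
    by (simp add: algebra_simps)
  also have "\<dots> = 0" using e1 e2 by simp
  finally have "d 0 = 0" using assms(1) by simp
  have "int p * d 1 = (- int p * d 0 + (int p - 1) * d 1 + d 2) - (d 2 - d 1) + int p * d 0"
    by (simp add: algebra_simps)
  also have "\<dots> = 0" using e0 e1 \<open>d 0 = 0\<close> by simp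
  finally have "d 1 = 0" using assms(1) by simp
  then show ?thesis using e0 \<open>d 0 = 0\<close> less_3_cases[OF \<open>a < 3\<close>] by auto
qed

lemma ramanujan_combination_dvd:
  assumes r: "r \<ge> 3" "coprime r p"
    and dvd: "\<And>x. x < 3 \<Longrightarrow> int r dvd (\<Sum>a<3. ramanujan p a x * d a)"
    and bound: "\<And>a. \<bar>d a\<bar> \<le> 2" and "a < 3"
  shows "d a = 0"
proof -
  have small: "int r dvd v \<Longrightarrow> \<bar>v\<bar> \<le> 2 \<Longrightarrow> v = 0" for v
    using dvd_imp_le_int[of v "int r"] r(1) by force
  have cop: "coprime (int r) (int p)" using r(2) by simp
  have e0: "int r dvd d 2 - d 1" and e1: "int r dvd - int p * d 0 + (int p - 1) * d 1 + d 2"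
    and e2: "int r dvd (int p * int p - int p) * d 0 + (int p - 1) * d 1 + d 2"
    using dvd[of 0] dvd[of 1] dvd[of 2] by (simp_all add: lessThan_3 ramanujan_def algebra_simps)
  have "int r dvd (int p * int p) * d 0"
    using dvd_diff[OF e2 e1] by (simp add: algebra_simps)
  then have "d 0 = 0"
    using cop small bound by (simp add: coprime_dvd_mult_right_iff)
  moreover from this have "int r dvd int p * d 1"
    using dvd_diff[OF e1 e0] by (simp add: algebra_simps)
  then have "d 1 = 0"
    using cop small bound by (simp add: coprime_dvd_mult_right_iff)
  moreover from this have "d 2 = 0"
    using e0 small bound by simp
  ultimately show ?thesis using less_3_cases[OF \<open>a < 3\<close>] by auto
qed

lemma row_value_0_bounded: "\<bar>row_value q m1 a 0 - row_value q m2 a 0\<bar> \<le> 2"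
  by (simp add: row_value_0)

lemma row_value_2_eq_imp_eq:
  assumes "q \<ge> 3" "row_value q m1 a 2 = row_value q m2 a 2" "b < 3"
  shows "m1 a b = m2 a b"
proof -
  define ws where "ws = [class_size q 0, class_size q 1, class_size q 2]"
  have super: "superincreasing ws"
    using superincreasing_class_sizes[OF assms(1), of 1] by (simp add: ws_def)
  have eq: "subset_sum ws [m1 a 0, m1 a 1, m1 a 2] = subset_sum ws [m2 a 0, m2 a 1, m2 a 2]"
    using assms(1,2) unfolding ws_def by (simp only: row_value_2 of_nat_eq_iff)
  have "[m1 a 0, m1 a 1, m1 a 2] = [m2 a 0, m2 a 1, m2 a 2]"
    using subset_sum_inj[OF super _ _ eq] by (simp add: ws_def)
  then show ?thesis using less_3_cases[OF assms(3)] by auto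
qed

lemma class_eigenvalue_col0_eq:
  assumes p: "prime p" and q: "prime q" and "p \<noteq> q" "p \<ge> 3" "q \<ge> 3"
    and eq: "int_spectrum p q m1 = int_spectrum p q m2" and "x < 3"
  shows "class_eigenvalue p q m1 x 0 = class_eigenvalue p q m2 x 0"
proof -
  define d where "d a = row_value q m1 a 0 - row_value q m2 a 0" for a
  have diff: "class_eigenvalue p q m1 x 0 - class_eigenvalue p q m2 x 0 = (\<Sum>a<3. ramanujan p a x * d a)" for x
    by (simp add: class_eigenvalue_eq_sum_rows d_def sum_subtractf[symmetric] algebra_simps)
  define ws where "ws = [class_size p 0 * q\<^sup>2, class_size p 1 * q\<^sup>2, class_size p 2 * q\<^sup>2]"
  define residues where "residues m = map (\<lambda>x. class_eigenvalue p q m x 0 mod int q) [0, 1, 2]" for m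
  have super: "superincreasing ws"
    unfolding ws_def by (rule superincreasing_class_sizes[OF \<open>p \<ge> 3\<close>]) (use q prime_gt_0_nat in simp)
  have "q \<ge> 1" using \<open>q \<ge> 3\<close> by simp
  have W: "weighted_mset ws (residues m1) = weighted_mset ws (residues m2)"
    using image_mset_int_spectrum_mod[OF \<open>q \<ge> 1\<close>, of p m1] image_mset_int_spectrum_mod[OF \<open>q \<ge> 1\<close>, of p m2] eq
    unfolding ws_def residues_def by metis
  have "residues m1 = residues m2"
    using weighted_mset_inj[OF super _ _ W] by (simp add: ws_def residues_def)
  then have dvd: "int q dvd (\<Sum>a<3. ramanujan p a x * d a)" if "x < 3" for x
    using less_3_cases[OF that] by (auto simp: residues_def diff[symmetric] mod_eq_dvd_iff[symmetric])
  have "coprime q p" using primes_coprime[OF q p] \<open>p \<noteq> q\<close> by simp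
  have bound: "\<bar>d a\<bar> \<le> 2" for a
    unfolding d_def by (rule row_value_0_bounded)
  have "d a = 0" if "a < 3" for a
    using ramanujan_combination_dvd[OF \<open>q \<ge> 3\<close> \<open>coprime q p\<close> dvd bound that] .
  then show ?thesis
    using diff[of x] by simp
qed

lemma class_eigenvalue_row0_eq:
  assumes "prime p" "prime q" "p \<noteq> q" "p \<ge> 3" "q \<ge> 3"
    and "int_spectrum p q m1 = int_spectrum p q m2" and "y < 3"
  shows "class_eigenvalue p q m1 0 y = class_eigenvalue p q m2 0 y"
  using class_eigenvalue_col0_eq[of q p "\<lambda>a b. m1 b a" "\<lambda>a b. m2 b a"] assms
  by (simp add: class_eigenvalue_swap[of p q] int_spectrum_swap[of p q])

lemma int_spectrum_split:
  "int_spectrum p q m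
    = (\<Sum>x<3. replicate_mset (class_size p x * class_size q 0) (class_eigenvalue p q m x 0))
      + replicate_mset (class_size p 0 * class_size q 1) (class_eigenvalue p q m 0 1)
      + replicate_mset (class_size p 0 * class_size q 2) (class_eigenvalue p q m 0 2)
      + weighted_mset
          [class_size p 1 * class_size q 1, class_size p 2 * class_size q 1,
           class_size p 1 * class_size q 2, class_size p 2 * class_size q 2]
          [class_eigenvalue p q m 1 1, class_eigenvalue p q m 2 1,
           class_eigenvalue p q m 1 2, class_eigenvalue p q m 2 2]"
  by (simp add: int_spectrum_def lessThan_3 add_ac)

lemma int_spectrum_inj_odd:
  assumes p: "prime p" and q: "prime q" and "3 \<le> p" "p < q"
    and eq: "int_spectrum p q m1 = int_spectrum p q m2" and "a < 3" "b < 3"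
  shows "m1 a b = m2 a b"
proof -
  have "q \<ge> 3" using assms by simp
  have "q \<noteq> p + 1"
    using prime_odd_nat[OF p] prime_odd_nat[OF q] \<open>3 \<le> p\<close> \<open>p < q\<close> by auto
  then have "q \<ge> p + 2" using \<open>p < q\<close> by simp
  note col0 = class_eigenvalue_col0_eq[OF p q _ \<open>3 \<le> p\<close> \<open>q \<ge> 3\<close> eq]
    and row0 = class_eigenvalue_row0_eq[OF p q _ \<open>3 \<le> p\<close> \<open>q \<ge> 3\<close> eq]
  define ws where "ws = [class_size p 1 * class_size q 1, class_size p 2 * class_size q 1,
      class_size p 1 * class_size q 2, class_size p 2 * class_size q 2]"
  define inner where "inner m = [class_eigenvalue p q m 1 1, class_eigenvalue p q m 2 1,
      class_eigenvalue p q m 1 2, class_eigenvalue p q m 2 2]" for m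
  have "superincreasing ws"
  proof -
    have "2 * (q - Suc 0) \<le> (p - Suc 0) * (q - Suc 0)" using \<open>3 \<le> p\<close> by (intro mult_le_mono1) simp
    then have "q + p - Suc 0 < (p - Suc 0) * (q - Suc 0)" using \<open>q \<ge> p + 2\<close> by linarith
    then show ?thesis using \<open>3 \<le> p\<close> \<open>q \<ge> p + 2\<close> by (simp add: ws_def class_size_def, arith)
  qed
  moreover have "weighted_mset ws (inner m1) = weighted_mset ws (inner m2)"
  proof -
    have "(\<Sum>x<3. replicate_mset (class_size p x * class_size q 0) (class_eigenvalue p q m1 x 0))
        = (\<Sum>x<3. replicate_mset (class_size p x * class_size q 0) (class_eigenvalue p q m2 x 0))"
      using col0 \<open>p < q\<close> by (intro sum.cong refl arg_cong[where f = "replicate_mset _"]) simp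
    then show ?thesis
      using eq row0[of 1] row0[of 2] \<open>p < q\<close> unfolding int_spectrum_split ws_def inner_def by simp
  qed
  ultimately have "inner m1 = inner m2"
    using weighted_mset_inj[of ws "inner m1" "inner m2"] by (simp add: ws_def inner_def)
  then have "class_eigenvalue p q m1 x 2 = class_eigenvalue p q m2 x 2" if "x < 3" for x
    using row0[of 2] less_3_cases[OF that] \<open>p < q\<close> by (auto simp: inner_def)
  then have "(\<Sum>a<3. ramanujan p a x * (row_value q m1 a 2 - row_value q m2 a 2)) = 0" if "x < 3" for x
    using that by (simp add: class_eigenvalue_eq_sum_rows right_diff_distrib sum_subtractf)
  then have "row_value q m1 a' 2 - row_value q m2 a' 2 = 0" if "a' < 3" for a'
    using ramanujan_combination_eq_0[OF prime_ge_1_nat[OF p], of "\<lambda>a. row_value q m1 a 2 - row_value q m2 a 2"] that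
    by blast
  then show ?thesis
    using row_value_2_eq_imp_eq[of q m1 a m2 b] \<open>q \<ge> 3\<close> \<open>a < 3\<close> \<open>b < 3\<close> by simp
qed

lemma quadruple_mset_inj:
  fixes u v w u' v' w' :: int
  assumes "v \<ge> 0" "w \<ge> 0" "v' \<ge> 0" "w' \<ge> 0"
    and eq: "{#u - v, u - v, u + v - 2 * w, u + v + 2 * w#} = {#u' - v', u' - v', u' + v' - 2 * w', u' + v' + 2 * w'#}"
  shows "u = u' \<and> v = v' \<and> w = w'"
proof -
  have "u = u'"
    using arg_cong[OF eq, of sum_mset] by simp
  moreover have "v + 2 * w = v' + 2 * w'"
  proof -
    have "u + v + 2 * w \<in># {#u' - v', u' - v', u' + v' - 2 * w', u' + v' + 2 * w'#}"
      unfolding eq[symmetric] by simp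
    moreover have "u' + v' + 2 * w' \<in># {#u - v, u - v, u + v - 2 * w, u + v + 2 * w#}"
      unfolding eq by simp
    ultimately show ?thesis using \<open>u = u'\<close> assms(1-4) by auto
  qed
  moreover have "v = v'"
  proof (rule ccontr)
    assume "v \<noteq> v'"
    have "{#u - v, u - v, u + v - 2 * w#} = {#u - v', u - v', u + v' - 2 * w'#}"
      using eq \<open>u = u'\<close> \<open>v + 2 * w = v' + 2 * w'\<close> by (simp add: add_mset_commute algebra_simps)
    moreover have "count {#u - v, u - v, u + v - 2 * w#} (u - v) \<ge> 2" by simp
    moreover have "count {#u - v', u - v', u + v' - 2 * w'#} (u - v) \<le> 1" using \<open>v \<noteq> v'\<close> by simp
    ultimately show False by simp
  qed
  ultimately show ?thesis by simp
qed

lemma row_value_2_nonneg: "q \<ge> 1 \<Longrightarrow> row_value q m a 2 \<ge> 0"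
  by (simp add: row_value_2)

text \<open>For \<open>p = 2\<close> all classes with \<open>y < 2\<close> have sizes divisible by \<open>q - 1\<close>, which exceeds
  the total size \<open>4\<close> of the remaining classes.\<close>
lemma int_spectrum_inj_two:
  assumes "q \<ge> 7" and eq: "int_spectrum 2 q m1 = int_spectrum 2 q m2" and "a < 3" "b < 3"
  shows "m1 a b = m2 a b"
proof -
  define low where "low m = (\<Sum>x<3. replicate_mset (class_size 2 x * class_size q 0) (class_eigenvalue 2 q m x 0)
      + replicate_mset (class_size 2 x * class_size q 1) (class_eigenvalue 2 q m x 1))" for m
  define high where "high m = (\<Sum>x<3. replicate_mset (class_size 2 x) (class_eigenvalue 2 q m x 2))" for m
  have split: "int_spectrum 2 q m = low m + high m" for m
    unfolding int_spectrum_def low_def high_def by (simp add: eval_nat_numeral add_ac class_size_def)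
  have dvd: "(q - 1) dvd count (low m) v" for m v
    unfolding low_def by (simp add: eval_nat_numeral count_sum class_size_def)
  have size: "size (high m) < q - 1" for m
    using \<open>q \<ge> 7\<close> by (simp add: high_def eval_nat_numeral class_size_def)
  have high_eq: "high m1 = high m2"
    using mset_eq_if_counts_dvd[OF eq[unfolded split] dvd dvd size size] .
  have high: "high m = {#row_value q m 2 2 - row_value q m 1 2, row_value q m 2 2 - row_value q m 1 2,
      row_value q m 2 2 + row_value q m 1 2 - 2 * row_value q m 0 2,
      row_value q m 2 2 + row_value q m 1 2 + 2 * row_value q m 0 2#}" for m
  proof -
    have "high m = replicate_mset 2 (class_eigenvalue 2 q m 0 2) + {#class_eigenvalue 2 q m 1 2#}
        + {#class_eigenvalue 2 q m 2 2#}"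
      by (simp add: high_def lessThan_3 class_size_def)
    moreover have "class_eigenvalue 2 q m 0 2 = row_value q m 2 2 - row_value q m 1 2"
      "class_eigenvalue 2 q m 1 2 = row_value q m 2 2 + row_value q m 1 2 - 2 * row_value q m 0 2"
      "class_eigenvalue 2 q m 2 2 = row_value q m 2 2 + row_value q m 1 2 + 2 * row_value q m 0 2"
      by (simp_all add: class_eigenvalue_eq_sum_rows lessThan_3 ramanujan_def)
    ultimately show ?thesis by (simp add: numeral_2_eq_2 add_mset_commute)
  qed
  have "row_value q m1 2 2 = row_value q m2 2 2 \<and> row_value q m1 1 2 = row_value q m2 1 2
      \<and> row_value q m1 0 2 = row_value q m2 0 2"
    using high_eq unfolding high
    by (rule quadruple_mset_inj[rotated 4]) (use row_value_2_nonneg \<open>q \<ge> 7\<close> in simp_all)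
  then have "row_value q m1 a' 2 = row_value q m2 a' 2" if "a' < 3" for a'
    using less_3_cases[OF that] by auto
  then show ?thesis
    using row_value_2_eq_imp_eq[of q m1 a m2 b] \<open>q \<ge> 7\<close> \<open>a < 3\<close> \<open>b < 3\<close> by simp
qed

section \<open>The cases \<open>p = 2\<close>, \<open>q \<in> {3, 5}\<close>\<close>

fun merge_lists :: "'a::linorder list \<Rightarrow> 'a list \<Rightarrow> 'a list" where
  "merge_lists [] ys = ys"
| "merge_lists xs [] = xs"
| "merge_lists (x # xs) (y # ys) =
    (if x \<le> y then x # merge_lists xs (y # ys) else y # merge_lists (x # xs) ys)"

fun merge_sort :: "'a::linorder list \<Rightarrow> 'a list" where
  "merge_sort xs =
    (if length xs \<le> 1 then xs
     else merge_lists (merge_sort (take (length xs div 2) xs)) (merge_sort (drop (length xs div 2) xs)))"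

declare merge_sort.simps [simp del]

lemma mset_merge_lists: "mset (merge_lists xs ys) = mset xs + mset ys"
  by (induction xs ys rule: merge_lists.induct) auto

lemma mset_merge_sort: "mset (merge_sort xs) = mset xs"
proof (induction xs rule: merge_sort.induct)
  case (1 xs)
  show ?case
  proof (cases "length xs \<le> 1")
    case False
    then have "mset (merge_sort xs)
        = mset (take (length xs div 2) xs) + mset (drop (length xs div 2) xs)"
      using 1 by (simp add: merge_sort.simps[of xs] mset_merge_lists)
    also have "\<dots> = mset xs"
      by (simp flip: mset_append)
    finally show ?thesis .
  qed (simp add: merge_sort.simps[of xs])
qed

lemma distinct_if_merge_sort_strictly_sorted:
  assumes "successively (<) (merge_sort xs)"
  shows "distinct xs"
proof -
  have "sorted_wrt (<) (merge_sort xs)"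
    using assms by (simp add: successively_conv_sorted_wrt)
  then have "distinct (merge_sort xs)"
    by (simp add: strict_sorted_iff)
  then show ?thesis
    using mset_eq_imp_distinct_iff mset_merge_sort by blast
qed

definition cubic_quartic_moments :: "int multiset \<Rightarrow> int \<times> int" where
  "cubic_quartic_moments S = (\<Sum>v\<in>#S. v ^ 3, \<Sum>v\<in>#S. v ^ 4)"

definition spectrum_values :: "nat \<Rightarrow> nat \<Rightarrow> (nat \<Rightarrow> nat \<Rightarrow> bool) \<Rightarrow> (nat \<times> int) list" where
  "spectrum_values p q m =
    [(class_size p x * class_size q y, class_eigenvalue p q m x y). x \<leftarrow> [0, 1, 2], y \<leftarrow> [0, 1, 2]]"

definition weighted_power_sums :: "(nat \<times> int) list \<Rightarrow> int \<times> int" where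
  "weighted_power_sums vs = ((\<Sum>(w, v)\<leftarrow>vs. int w * (v * v * v)), (\<Sum>(w, v)\<leftarrow>vs. int w * ((v * v) * (v * v))))"

lemma cubic_quartic_moments_int_spectrum:
  "cubic_quartic_moments (int_spectrum p q m) = weighted_power_sums (spectrum_values p q m)"
  by (simp add: cubic_quartic_moments_def weighted_power_sums_def spectrum_values_def int_spectrum_def
      lessThan_3 add_ac power3_eq_cube power4_eq_xxxx mult_ac)

definition pattern_of_list :: "bool list \<Rightarrow> nat \<Rightarrow> nat \<Rightarrow> bool" where
  "pattern_of_list bs a b \<longleftrightarrow> \<not> (a = 2 \<and> b = 2) \<and> bs ! (3 * a + b)"

definition list_of_pattern :: "(nat \<Rightarrow> nat \<Rightarrow> bool) \<Rightarrow> bool list" where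
  "list_of_pattern m = [m 0 0, m 0 1, m 0 2, m 1 0, m 1 1, m 1 2, m 2 0, m 2 1]"

lemma pattern_of_list_of_pattern:
  assumes "\<not> m 2 2" "a < 3" "b < 3"
  shows "pattern_of_list (list_of_pattern m) a b = m a b"
  using assms less_3_cases[OF assms(2)] less_3_cases[OF assms(3)]
  by (auto simp: pattern_of_list_def list_of_pattern_def)

lemma class_eigenvalue_code [code]:
  "class_eigenvalue p q m x y =
    sum_list [if m a b then ramanujan p a x * ramanujan q b y else 0. a \<leftarrow> [0, 1, 2], b \<leftarrow> [0, 1, 2]]"
  by (simp add: class_eigenvalue_def lessThan_3 add_ac)

lemma class_eigenvalue_cong:
  "(\<And>a b. a < 3 \<Longrightarrow> b < 3 \<Longrightarrow> m a b = m' a b) \<Longrightarrow> class_eigenvalue p q m x y = class_eigenvalue p q m' x y"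
  unfolding class_eigenvalue_def by (intro sum.cong refl) auto

lemma int_spectrum_cong:
  "(\<And>a b. a < 3 \<Longrightarrow> b < 3 \<Longrightarrow> m a b = m' a b) \<Longrightarrow> int_spectrum p q m = int_spectrum p q m'"
  unfolding int_spectrum_def using class_eigenvalue_cong[of m m'] by simp

text \<open>The remaining cases \<open>p = 2\<close>, \<open>q \<in> {3, 5}\<close> are checked by evaluation: the numbers
  of closed walks of lengths 3 and 4 already separate the \<open>2\<^sup>8\<close> patterns.\<close>
lemma cubic_quartic_moments_sorted_2_3:
  "successively (<) (merge_sort
    (map (\<lambda>bs. cubic_quartic_moments (int_spectrum 2 3 (pattern_of_list bs))) (List.n_lists 8 [False, True])))"
  unfolding cubic_quartic_moments_int_spectrum by code_simp

lemma cubic_quartic_moments_sorted_2_5: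
  "successively (<) (merge_sort
    (map (\<lambda>bs. cubic_quartic_moments (int_spectrum 2 5 (pattern_of_list bs))) (List.n_lists 8 [False, True])))"
  unfolding cubic_quartic_moments_int_spectrum by code_simp

lemma int_spectrum_inj_small:
  assumes q: "q \<in> {3, 5}" and "\<not> m1 2 2" "\<not> m2 2 2"
    and eq: "int_spectrum 2 q m1 = int_spectrum 2 q m2" and "a < 3" "b < 3"
  shows "m1 a b = m2 a b"
proof -
  let ?moments = "\<lambda>bs. cubic_quartic_moments (int_spectrum 2 q (pattern_of_list bs))"
  have "successively (<) (merge_sort (map ?moments (List.n_lists 8 [False, True])))"
    using q cubic_quartic_moments_sorted_2_3 cubic_quartic_moments_sorted_2_5 by auto
  then have "inj_on ?moments (set (List.n_lists 8 [False, True]))"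
    using distinct_if_merge_sort_strictly_sorted distinct_map by blast
  moreover have "list_of_pattern m \<in> set (List.n_lists 8 [False, True])" for m
    by (simp add: set_n_lists list_of_pattern_def)
  moreover have "int_spectrum 2 q (pattern_of_list (list_of_pattern m)) = int_spectrum 2 q m" if "\<not> m 2 2" for m
    by (rule int_spectrum_cong) (simp add: pattern_of_list_of_pattern that)
  ultimately have "list_of_pattern m1 = list_of_pattern m2"
    using eq \<open>\<not> m1 2 2\<close> \<open>\<not> m2 2 2\<close> by (metis (no_types, lifting) inj_onD)
  then show ?thesis
    using pattern_of_list_of_pattern \<open>\<not> m1 2 2\<close> \<open>\<not> m2 2 2\<close> \<open>a < 3\<close> \<open>b < 3\<close> by metis
qed

lemma int_spectrum_inj:
  assumes p: "prime p" and q: "prime q" and "p < q" and "\<not> m1 2 2" "\<not> m2 2 2"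
    and eq: "int_spectrum p q m1 = int_spectrum p q m2" and "a < 3" "b < 3"
  shows "m1 a b = m2 a b"
proof -
  consider "3 \<le> p" | "p = 2" "7 \<le> q" | "p = 2" "q \<in> {3, 5}"
  proof (cases "3 \<le> p")
    case False
    then have "p = 2" using prime_ge_2_nat[OF p] by simp
    moreover have "odd q" using prime_odd_nat[OF q] \<open>p < q\<close> \<open>p = 2\<close> by simp
    then have "7 \<le> q \<or> q = 3 \<or> q = 5" using \<open>p < q\<close> \<open>p = 2\<close> by presburger
    then have "7 \<le> q \<or> q \<in> {3, 5}" by blast
    ultimately show ?thesis using that by blast
  qed
  then show ?thesis
  proof cases
    case 1
    then show ?thesis using int_spectrum_inj_odd[OF p q _ \<open>p < q\<close> eq] assms by blast
  next
    case 2
    then show ?thesis using int_spectrum_inj_two eq assms by blast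
  next
    case 3
    then show ?thesis using int_spectrum_inj_small eq assms by blast
  qed
qed

lemma int_spectrum_eq_if_Spec_eq:
  assumes p: "prime p" and q: "prime q" and "p \<noteq> q"
    and notin: "p\<^sup>2 * q\<^sup>2 \<notin> D1" "p\<^sup>2 * q\<^sup>2 \<notin> D2"
    and "Spec (ICG_adj (p\<^sup>2 * q\<^sup>2) D1) = Spec (ICG_adj (p\<^sup>2 * q\<^sup>2) D2)"
  shows "int_spectrum p q (\<lambda>a b. p ^ a * q ^ b \<in> D1) = int_spectrum p q (\<lambda>a b. p ^ a * q ^ b \<in> D2)"
proof -
  have "image_mset (\<lambda>z. \<lfloor>Re z\<rfloor>) (image_mset of_int (int_spectrum p q (\<lambda>a b. p ^ a * q ^ b \<in> D1)))
      = image_mset (\<lambda>z. \<lfloor>Re z\<rfloor>) (image_mset (of_int :: int \<Rightarrow> complex)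
          (int_spectrum p q (\<lambda>a b. p ^ a * q ^ b \<in> D2)))"
    using assms(6) unfolding Spec_ICG_adj_prime_sq_mult_sq[OF p q \<open>p \<noteq> q\<close> notin(1)]
      Spec_ICG_adj_prime_sq_mult_sq[OF p q \<open>p \<noteq> q\<close> notin(2)] by (rule arg_cong)
  then show ?thesis
    by (simp add: image_mset.compositionality comp_def)
qed

lemma divisor_sets_eq:
  fixes p q :: nat
  assumes p: "prime p" and q: "prime q"
    and "D1 \<subseteq> {d. d dvd p\<^sup>2 * q\<^sup>2}" "D2 \<subseteq> {d. d dvd p\<^sup>2 * q\<^sup>2}"
    and same: "\<And>a b. a < 3 \<Longrightarrow> b < 3 \<Longrightarrow> p ^ a * q ^ b \<in> D1 \<longleftrightarrow> p ^ a * q ^ b \<in> D2"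
  shows "D1 = D2"
proof -
  have "d \<in> D1 \<longleftrightarrow> d \<in> D2" for d
  proof (cases "d dvd p\<^sup>2 * q\<^sup>2")
    case True
    then obtain a b where "a \<le> 2" "b \<le> 2" "d = p ^ a * q ^ b"
      by (rule dvd_prime_sq_mult_sq[OF p q])
    then show ?thesis using same[of a b] by simp
  next
    case False
    then show ?thesis using assms(3,4) by auto
  qed
  then show ?thesis by blast
qed

theorem theorem1p4:
  fixes p q n :: nat and D1 D2 :: "nat set"
  assumes "prime p" and "prime q" and "2 \<le> p" and "p < q"
    and "n = p^2 * q^2"
    and "D1 \<subseteq> {d. d dvd n} - {n}"
    and "D2 \<subseteq> {d. d dvd n} - {n}"
    and "Spec (ICG_adj n D1) = Spec (ICG_adj n D2)"
  shows "D1 = D2"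
proof -
  note p = \<open>prime p\<close> and q = \<open>prime q\<close>
  have notin: "p\<^sup>2 * q\<^sup>2 \<notin> D1" "p\<^sup>2 * q\<^sup>2 \<notin> D2"
    using assms(5-7) by auto
  have "int_spectrum p q (\<lambda>a b. p ^ a * q ^ b \<in> D1) = int_spectrum p q (\<lambda>a b. p ^ a * q ^ b \<in> D2)"
    by (rule int_spectrum_eq_if_Spec_eq[OF p q _ notin]) (use assms(4,5,8) in simp_all)
  then have "p ^ a * q ^ b \<in> D1 \<longleftrightarrow> p ^ a * q ^ b \<in> D2" if "a < 3" "b < 3" for a b
    using int_spectrum_inj[OF p q \<open>p < q\<close>, of "\<lambda>a b. p ^ a * q ^ b \<in> D1" "\<lambda>a b. p ^ a * q ^ b \<in> D2"]
      notin that by simp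
  then show ?thesis
    using assms(5-7) by (intro divisor_sets_eq[OF p q]) auto
qed

end
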